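(* Let $p$ be a prime, $g$ a generator of $U(\mathbb Z/p\mathbb Z)$, $n\ge 1$ an integer, $\varphi=\cos\frac{2\pi}{p-1}+i\sin\frac{2\pi}{p-1}$ and $\omega=\cos\frac{2\pi}{n}+i\sin\frac{2\pi}{n}$. For $1\le k\le n$ let $\beta_{1k}\in\mathbb R$ and $\beta_{2k}\ge 0$, with $\beta_{11}\ge\beta_{21}\ge 0$, and let $\mathcal B_k=\{\beta_{1k},\beta_{2k},\beta_{2k}\varphi,\dots,\beta_{2k}\varphi^{p-2}\}$ (with multiplicities), and $\mathcal B=\bigcup_{k=1}^n\mathcal B_k$. Let $S_1,\dots,S_n$ be real $g$-circulant matrices of order $p$ with spectrum $\Sigma(S_k)=\mathcal B_k$ for each $k$. Suppose that $\mathcal B_{n+2-k}=\overline{\mathcal B_k}$ for $2\le k\le n$, and that $$L_k=\frac1n\sum_{\ell=1}^n S_\ell\,\omega^{-(k-1)(\ell-1)}\ \ge 0\quad\text{(entrywise) for all }1\le k\le n.$$ Then $\mathcal B$ is the spectrum of a nonnegative $g$-circulant matrix by blocks (of order $pn$, with $p\times p$ blocks of order $n$).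
   Context: A $g$-circulant matrix of order $p$ is a matrix whose $(i,j)$ entry is $a_{j-(i-1)g}$ for its first row $(a_1,\dots,a_p)$ (subscripts modulo $p$). A block matrix $A=(A_{ij})_{1\le i,j\le p}$ with each block of size $n\times n$ is a $g$-circulant matrix by blocks if $A_{ij}=A_{i+1,j+g}$ for all $1\le i,j\le p$, subscripts taken modulo $p$; equivalently $A=g\text{-}circ(A_1,\dots,A_p)$ with block $(i,j)$ equal to $A_{j-(i-1)g}$. *)

theory Defs
  imports "Jordan_Normal_Form.Jordan_Normal_Form" "HOL-Number_Theory.Residue_Primitive_Roots"
begin

definition spec_mset :: "complex mat \<Rightarrow> complex multiset" where
  "spec_mset A = proots (char_poly A)"

definition rspec :: "real mat \<Rightarrow> complex multiset" where
  "rspec A = spec_mset (map_mat complex_of_real A)"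

text \<open>g-circulant matrix of order p (0-indexed): entry (i,j) is a((j - i g) mod p),
  i.e. 1-indexed entry (i,j) is a_{j-(i-1)g} for the first row a.\<close>
definition g_circulant :: "nat \<Rightarrow> nat \<Rightarrow> 'a mat \<Rightarrow> bool" where
  "g_circulant p g A \<longleftrightarrow> A \<in> carrier_mat p p \<and>
     (\<exists>a :: nat \<Rightarrow> 'a. \<forall>i<p. \<forall>j<p. A $$ (i, j) = a (nat ((int j - int i * int g) mod int p)))"

text \<open>g-circulant by blocks: a p x p arrangement of n x n blocks A_ij (0-indexed, block (i,j)
  occupies rows i*n.. and columns j*n..) with A_ij = A_{i+1,j+g}, indices mod p.\<close>
definition g_circulant_blocks :: "nat \<Rightarrow> nat \<Rightarrow> nat \<Rightarrow> 'a mat \<Rightarrow> bool" where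
  "g_circulant_blocks p n g A \<longleftrightarrow> A \<in> carrier_mat (p*n) (p*n) \<and>
     (\<forall>i<p. \<forall>j<p. \<forall>a<n. \<forall>b<n.
        A $$ (((i+1) mod p) * n + a, ((j+g) mod p) * n + b) = A $$ (i*n + a, j*n + b))"

definition Bk :: "nat \<Rightarrow> real \<Rightarrow> real \<Rightarrow> complex multiset" where
  "Bk p b1 b2 = {# complex_of_real b1 #} +
     mset (map (\<lambda>j. complex_of_real b2 * cis (2*pi / real (p-1)) ^ j) [0..<p-1])"

end

theory Submission
  imports Defs "Jordan_Normal_Form.Schur_Decomposition"
begin

(* Put D = diag(S_1, ..., S_n). The matrices L_k are the blockwise inverse discrete Fourier
   transform of (S_1, ..., S_n), so conjugating D by the Fourier matrix of order n (combined with
   the perfect shuffle of the index set {0..<pn}) yields the matrix whose (i,j) block of order n is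
   the circulant matrix with first row ((L_1)_ij, ..., (L_n)_ij). This matrix is similar to D, so
   its spectrum is B; it is nonnegative because the L_k are; and it is g-circulant by blocks
   because every S_l, hence every L_k, is g-circulant. *)

lemma sum_lessThan_mult_split:
  fixes f :: "nat \<Rightarrow> 'a::comm_monoid_add"
  shows "(\<Sum>x<m*k. f x) = (\<Sum>i<m. \<Sum>a<k. f (i*k + a))"
proof -
  have "sum f {i*k..<i*k + k} = (\<Sum>a<k. f (i*k + a))" for i
    by (rule sum.reindex_bij_witness[of _ "\<lambda>a. i*k + a" "\<lambda>x. x - i*k"]) auto
  then show ?thesis
    using sum.nat_group[where g=f and n=m and k=k] by simp
qed

lemma mult_add_less_mult:
  fixes i a m k :: nat
  assumes "i < m" "a < k"
  shows "i*k + a < m*k"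
proof -
  have "i*k + a < Suc i * k" using assms by simp
  also have "\<dots> \<le> m*k" using assms by (intro mult_le_mono1) simp
  finally show ?thesis .
qed

lemma power_eq_power_mod:
  fixes z :: "'a::monoid_mult"
  assumes "z ^ n = 1"
  shows "z ^ m = z ^ (m mod n)"
  by (metis assms div_mult_mod_eq mult.commute mult_1 power_add power_mult power_one)

lemma root_unity_power_mult_inverse_power:
  fixes w :: "'a::field"
  assumes w: "w ^ n = 1" and a: "a < n"
  shows "w ^ (a*b) * inverse w ^ (a'*b) = inverse w ^ (((a' + n - a) mod n) * b)"
proof -
  have "w ^ (n - a) * w ^ a = 1"
    by (metis w a less_imp_le le_add_diff_inverse2 power_add)
  from inverse_unique[OF this] have "w ^ a = inverse w ^ (n - a)"
    by (simp add: power_inverse)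
  then have "w ^ a * inverse w ^ a' = inverse w ^ (n - a + a')"
    by (simp add: power_add)
  also have "n - a + a' = a' + n - a"
    using a by simp
  also have "inverse w ^ (a' + n - a) = inverse w ^ ((a' + n - a) mod n)"
    using w by (intro power_eq_power_mod) (simp add: power_inverse)
  finally have "w ^ a * inverse w ^ a' = inverse w ^ ((a' + n - a) mod n)" .
  moreover have "w ^ (a*b) * inverse w ^ (a'*b) = (w ^ a * inverse w ^ a') ^ b"
    by (simp add: power_mult power_mult_distrib)
  ultimately show ?thesis
    by (simp add: power_mult)
qed

lemma cis_root_unity_power_eq_1:
  fixes n :: nat
  assumes "n > 0"
  shows "cis (2*pi / n) ^ n = 1"
  using assms by (simp add: DeMoivre)

lemma cis_root_unity_power_neq_1:
  fixes c n :: nat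
  assumes "0 < c" and "c < n"
  shows "cis (2*pi / n) ^ c \<noteq> 1"
proof
  assume "cis (2*pi / n) ^ c = 1"
  then have "cis (2*pi * real c / n) = cis (2*pi * real 0 / n)"
    by (simp add: DeMoivre mult_ac)
  then have "c = 0"
    using assms by (intro inj_onD[OF bij_betw_imp_inj_on[OF bij_betw_roots_unity[of n]]]) auto
  with assms show False
    by simp
qed

lemma sum_root_unity_orthogonal:
  fixes a a' n :: nat
  assumes a: "a < n" and a': "a' < n"
  shows "(\<Sum>b<n. cis (2*pi / n) ^ (a*b) * inverse (cis (2*pi / n)) ^ (a'*b)) =
    (if a = a' then of_nat n else 0)"
proof -
  let ?w = "cis (2*pi / n)"
  define c where "c = (a' + n - a) mod n"
  have w: "?w ^ n = 1"
    using a by (intro cis_root_unity_power_eq_1) simp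
  have "(\<Sum>b<n. ?w ^ (a*b) * inverse ?w ^ (a'*b)) = (\<Sum>b<n. (inverse ?w ^ c) ^ b)"
    by (intro sum.cong refl, subst root_unity_power_mult_inverse_power[OF w a]) (simp add: c_def power_mult)
  also have "\<dots> = (if a = a' then of_nat n else 0)"
  proof (cases "a = a'")
    case True
    then show ?thesis
      by (simp add: c_def)
  next
    case False
    have "0 < c"
    proof (cases "a < a'")
      case True
      with a' show ?thesis
        by (simp add: c_def le_mod_geq)
    next
      case False
      with \<open>a \<noteq> a'\<close> a show ?thesis
        by (simp add: c_def)
    qed
    moreover have "c < n"
      using a by (simp add: c_def)
    ultimately have "inverse ?w ^ c \<noteq> 1"
      unfolding power_inverse inverse_eq_1_iff by (rule cis_root_unity_power_neq_1)
    moreover have "(inverse ?w ^ c) ^ n = (inverse (?w ^ n)) ^ c"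
      by (simp only: power_inverse power_mult[symmetric] mult.commute)
    ultimately show ?thesis
      using False w by (simp add: geometric_sum)
  qed
  finally show ?thesis .
qed

lemma index_mult_mat_sum:
  assumes "i < dim_row A" and "j < dim_col B" and "dim_col A = dim_row B"
  shows "(A * B) $$ (i, j) = (\<Sum>k<dim_row B. A $$ (i, k) * B $$ (k, j))"
  using assms by (simp add: scalar_prod_def atLeast0LessThan)

lemma diag_block_mat_uniform:
  assumes p: "p > 0" and T: "\<And>b. b < m \<Longrightarrow> T b \<in> carrier_mat p p"
  shows "diag_block_mat (map T [0..<m]) =
    mat (m*p) (m*p) (\<lambda>(y, z). if y div p = z div p then T (y div p) $$ (y mod p, z mod p) else 0)"
    (is "_ = ?M m")
  using T
proof (induction m)
  case 0
  then show ?case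
    by (auto intro: eq_matI)
next
  case (Suc m)
  have Tm: "T m \<in> carrier_mat p p"
    using Suc.prems by simp
  have last_block: "y div p = m" "y mod p = y - m*p" if "\<not> y < m*p" "y < Suc m * p" for y
  proof -
    define r where "r = y - m*p"
    have "y = m*p + r" "r < p"
      using that by (simp_all add: r_def)
    then show "y div p = m" "y mod p = y - m*p"
      using p by simp_all
  qed
  have before_last: "y div p < m" if "y < m*p" for y
    using that p by (simp add: div_less_iff_less_mult)
  have "diag_block_mat (map T [0..<Suc m]) = four_block_mat (?M m) (0\<^sub>m (m*p) p) (0\<^sub>m p (m*p)) (T m)"
    using Suc carrier_matD[OF Tm] by (simp add: diag_block_mat_last)
  also have "\<dots> = ?M (Suc m)"
  proof (rule eq_matI)
    fix i j assume "i < dim_row (?M (Suc m))" "j < dim_col (?M (Suc m))"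
    then have i: "i < m*p + p" and j: "j < m*p + p"
      by simp_all
    have "four_block_mat (?M m) (0\<^sub>m (m*p) p) (0\<^sub>m p (m*p)) (T m) $$ (i, j) =
      (if i < m*p then if j < m*p then ?M m $$ (i, j) else 0
       else if j < m*p then 0 else T m $$ (i - m*p, j - m*p))"
      using i j Tm by (subst index_mat_four_block) auto
    also have "\<dots> = ?M (Suc m) $$ (i, j)"
      using i j before_last[of i] before_last[of j] last_block[of i] last_block[of j]
      by (cases "i < m*p"; cases "j < m*p") auto
    finally show "four_block_mat (?M m) (0\<^sub>m (m*p) p) (0\<^sub>m p (m*p)) (T m) $$ (i, j) = ?M (Suc m) $$ (i, j)" .
  qed (use Tm in simp_all)
  finally show ?case .
qed

lemma char_poly_diag_block_mat:
  fixes As :: "complex mat list"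
  assumes "\<And>A. A \<in> set As \<Longrightarrow> square_mat A"
  shows "char_poly (diag_block_mat As) = (\<Prod>A\<leftarrow>As. char_poly A)"
  using assms
proof (induction As)
  case Nil
  then show ?case
    using char_poly_upper_triangular[of "0\<^sub>m 0 0 :: complex mat" 0]
    by (simp add: upper_triangular_def diag_mat_def)
next
  case (Cons A As)
  let ?B = "diag_block_mat As"
  have A: "A \<in> carrier_mat (dim_row A) (dim_row A)"
    using Cons.prems[of A] by (intro carrier_matI) auto
  have "square_mat ?B"
    using Cons.prems by (intro diag_block_mat_square) simp
  then have B: "?B \<in> carrier_mat (dim_row ?B) (dim_row ?B)"
    by (intro carrier_matI) auto
  have split: "diag_block_mat (A # As) =
    four_block_mat A (0\<^sub>m (dim_row A) (dim_row ?B)) (0\<^sub>m (dim_row ?B) (dim_row A)) ?B"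
    using carrier_matD[OF A] carrier_matD[OF B] by (simp add: Let_def)
  have "char_poly (diag_block_mat (A # As)) = char_poly A * char_poly ?B"
    using char_poly_factorized[OF A] char_poly_factorized[OF B]
    by (intro char_poly_0_block[OF split _ _ A zero_carrier_mat B]) blast+
  with Cons show ?case
    by simp
qed

lemma spec_mset_diag_block_mat:
  assumes "\<And>A. A \<in> set As \<Longrightarrow> square_mat A"
  shows "spec_mset (diag_block_mat As) = (\<Sum>A\<leftarrow>As. spec_mset A)"
proof -
  have "char_poly A \<noteq> 0" if "A \<in> set As" for A
  proof -
    have "A \<in> carrier_mat (dim_row A) (dim_row A)"
      using assms[OF that] by (intro carrier_matI) auto
    from degree_monic_char_poly[OF this] show ?thesis
      by auto
  qed
  then have "0 \<notin> set (map char_poly As)"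
    by auto
  from proots_prod_list[OF this] show ?thesis
    by (simp add: spec_mset_def char_poly_diag_block_mat[OF assms] o_def)
qed

(* Rows are indexed as x = i*n + a and columns as y = b*p + j (i, j < p and a, b < n); the entry
   is f a b if i = j and 0 otherwise. So shuffle_mat p n f is the Kronecker product of the identity
   of order p with (f a b), its columns permuted by the perfect shuffle that passes from the block
   layout of g_circulant_blocks to that of diag_block_mat; unshuffle_mat is laid out transposed. *)
definition shuffle_mat :: "nat \<Rightarrow> nat \<Rightarrow> (nat \<Rightarrow> nat \<Rightarrow> 'a::zero) \<Rightarrow> 'a mat" where
  "shuffle_mat p n f = mat (p*n) (p*n) (\<lambda>(x, y). if x div n = y mod p then f (x mod n) (y div p) else 0)"

definition unshuffle_mat :: "nat \<Rightarrow> nat \<Rightarrow> (nat \<Rightarrow> nat \<Rightarrow> 'a::zero) \<Rightarrow> 'a mat" where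
  "unshuffle_mat p n g = mat (p*n) (p*n) (\<lambda>(y, x). if y mod p = x div n then g (y div p) (x mod n) else 0)"

lemma index_shuffle_diag_block_unshuffle:
  fixes f g :: "nat \<Rightarrow> nat \<Rightarrow> 'a::semiring_0"
  assumes p: "p > 0" and T: "\<And>b. b < n \<Longrightarrow> T b \<in> carrier_mat p p"
    and x: "x < p*n" and x': "x' < p*n"
  shows "(shuffle_mat p n f * diag_block_mat (map T [0..<n]) * unshuffle_mat p n g) $$ (x, x') =
    (\<Sum>b<n. f (x mod n) b * T b $$ (x div n, x' div n) * g b (x' mod n))"
proof -
  let ?P = "shuffle_mat p n f" and ?D = "diag_block_mat (map T [0..<n])" and ?Q = "unshuffle_mat p n g"
  have D: "?D = mat (n*p) (n*p) (\<lambda>(y, z). if y div p = z div p then T (y div p) $$ (y mod p, z mod p) else 0)"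
    using diag_block_mat_uniform[OF p T] .
  have blocks: "x div n < p" "x' div n < p"
    using x x' by (simp_all add: less_mult_imp_div_less)
  have idx: "b*p + j < n*p" "(b*p + j) div p = b" "(b*p + j) mod p = j" if "b < n" "j < p" for b j
    using that mult_add_less_mult[OF that] by simp_all
  have PD: "(?P * ?D) $$ (x, b*p + j) = f (x mod n) b * T b $$ (x div n, j)" if b: "b < n" and j: "j < p" for b j
  proof -
    have "(?P * ?D) $$ (x, b*p + j) = (\<Sum>y<n*p. ?P $$ (x, y) * ?D $$ (y, b*p + j))"
      using x idx[OF b j] by (subst index_mult_mat_sum) (simp_all add: D shuffle_mat_def mult.commute[of p n])
    also have "\<dots> = (\<Sum>c<n. \<Sum>k<p. ?P $$ (x, c*p + k) * ?D $$ (c*p + k, b*p + j))"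
      by (rule sum_lessThan_mult_split)
    also have "\<dots> = (\<Sum>c<n. \<Sum>k<p. if k = x div n then if c = b then f (x mod n) b * T b $$ (k, j) else 0 else 0)"
      using x idx b j by (intro sum.cong refl) (auto simp: shuffle_mat_def D mult.commute[of p n])
    also have "\<dots> = f (x mod n) b * T b $$ (x div n, j)"
      using b blocks by simp
    finally show ?thesis .
  qed
  have "(?P * ?D * ?Q) $$ (x, x') = (\<Sum>z<n*p. (?P * ?D) $$ (x, z) * ?Q $$ (z, x'))"
    using x x' by (subst index_mult_mat_sum) (simp_all add: D shuffle_mat_def unshuffle_mat_def mult.commute[of p n])
  also have "\<dots> = (\<Sum>b<n. \<Sum>j<p. (?P * ?D) $$ (x, b*p + j) * ?Q $$ (b*p + j, x'))"
    by (rule sum_lessThan_mult_split)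
  also have "\<dots> = (\<Sum>b<n. \<Sum>j<p. if j = x' div n then f (x mod n) b * T b $$ (x div n, j) * g b (x' mod n) else 0)"
    using x' idx by (intro sum.cong refl) (auto simp: PD unshuffle_mat_def mult.commute[of p n])
  also have "\<dots> = (\<Sum>b<n. f (x mod n) b * T b $$ (x div n, x' div n) * g b (x' mod n))"
    using blocks by simp
  finally show ?thesis .
qed

lemma shuffle_mat_mult_unshuffle_mat:
  fixes f g :: "nat \<Rightarrow> nat \<Rightarrow> 'a::semiring_1"
  assumes p: "p > 0"
    and fg: "\<And>a a'. a < n \<Longrightarrow> a' < n \<Longrightarrow> (\<Sum>b<n. f a b * g b a') = (if a = a' then 1 else 0)"
  shows "shuffle_mat p n f * unshuffle_mat p n g = 1\<^sub>m (p*n)"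
proof (rule eq_matI)
  fix x x' assume "x < dim_row (1\<^sub>m (p*n) :: 'a mat)" "x' < dim_col (1\<^sub>m (p*n) :: 'a mat)"
  then have x: "x < p*n" and x': "x' < p*n"
    by simp_all
  have "diag_block_mat (map (\<lambda>_. 1\<^sub>m p) [0..<n]) = (1\<^sub>m (p*n) :: 'a mat)"
    using diag_block_one_mat[of "map (\<lambda>_. 1\<^sub>m p :: 'a mat) [0..<n]"] by (simp add: o_def sum_list_triv mult.commute)
  then have "shuffle_mat p n f * unshuffle_mat p n g =
    shuffle_mat p n f * diag_block_mat (map (\<lambda>_. 1\<^sub>m p) [0..<n]) * unshuffle_mat p n g"
    by (simp add: shuffle_mat_def)
  then have "(shuffle_mat p n f * unshuffle_mat p n g) $$ (x, x') =
    (\<Sum>b<n. f (x mod n) b * 1\<^sub>m p $$ (x div n, x' div n) * g b (x' mod n))"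
    using index_shuffle_diag_block_unshuffle[OF p _ x x', of "\<lambda>_. 1\<^sub>m p"] by simp
  also have "\<dots> = (if x div n = x' div n then (\<Sum>b<n. f (x mod n) b * g b (x' mod n)) else 0)"
    using x x' by (simp add: less_mult_imp_div_less)
  also have "\<dots> = 1\<^sub>m (p*n) $$ (x, x')"
  proof -
    have "n > 0"
      using x by (cases n) auto
    moreover have "x = x' \<longleftrightarrow> x div n = x' div n \<and> x mod n = x' mod n"
      by (metis div_mult_mod_eq)
    ultimately show ?thesis
      using x x' fg[of "x mod n" "x' mod n"] by auto
  qed
  finally show "(shuffle_mat p n f * unshuffle_mat p n g) $$ (x, x') = 1\<^sub>m (p*n) $$ (x, x')" .
qed (simp_all add: shuffle_mat_def unshuffle_mat_def)

(* Block (i,j) of order n is the circulant matrix with first row L 0 i j, ..., L (n-1) i j. *)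
definition circulant_blocks_mat :: "nat \<Rightarrow> nat \<Rightarrow> (nat \<Rightarrow> nat \<Rightarrow> nat \<Rightarrow> 'a) \<Rightarrow> 'a mat" where
  "circulant_blocks_mat p n L =
    mat (p*n) (p*n) (\<lambda>(x, y). L ((y mod n + n - x mod n) mod n) (x div n) (y div n))"

(* For T b = S_(b+1) and c = k-1 these are the entries of the matrix L_k of the statement. *)
definition inverse_dft :: "nat \<Rightarrow> (nat \<Rightarrow> complex mat) \<Rightarrow> nat \<Rightarrow> nat \<Rightarrow> nat \<Rightarrow> complex" where
  "inverse_dft n T c i j = (\<Sum>b<n. T b $$ (i, j) * inverse (cis (2*pi / n)) ^ (c*b)) / n"

lemma circulant_blocks_mat_similar_diag_block_mat:
  assumes p: "p > 0" and n: "n > 0" and T: "\<And>b. b < n \<Longrightarrow> T b \<in> carrier_mat p p"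
  shows "similar_mat (circulant_blocks_mat p n (inverse_dft n T)) (diag_block_mat (map T [0..<n]))"
proof -
  let ?w = "cis (2*pi / n)"
  let ?P = "shuffle_mat p n (\<lambda>a b. ?w ^ (a*b))"
  let ?Q = "unshuffle_mat p n (\<lambda>b a. inverse ?w ^ (a*b) / n)"
  let ?D = "diag_block_mat (map T [0..<n])"
  have PQ: "?P * ?Q = 1\<^sub>m (p*n)"
  proof (rule shuffle_mat_mult_unshuffle_mat[OF p])
    fix a a' assume "a < n" "a' < n"
    with sum_root_unity_orthogonal[OF this] n show "(\<Sum>b<n. ?w ^ (a*b) * (inverse ?w ^ (a'*b) / n)) = (if a = a' then 1 else 0)"
      by (simp add: sum_divide_distrib[symmetric])
  qed
  have QP: "?Q * ?P = 1\<^sub>m (p*n)"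
    by (rule mat_mult_left_right_inverse[OF _ _ PQ]) (simp_all add: shuffle_mat_def unshuffle_mat_def)
  have "circulant_blocks_mat p n (inverse_dft n T) = ?P * ?D * ?Q"
  proof (rule eq_matI)
    fix x x' assume "x < dim_row (?P * ?D * ?Q)" "x' < dim_col (?P * ?D * ?Q)"
    then have x: "x < p*n" and x': "x' < p*n"
      by (simp_all add: shuffle_mat_def unshuffle_mat_def)
    let ?c = "(x' mod n + n - x mod n) mod n"
    have "(?P * ?D * ?Q) $$ (x, x') =
      (\<Sum>b<n. ?w ^ ((x mod n)*b) * T b $$ (x div n, x' div n) * (inverse ?w ^ ((x' mod n)*b) / n))"
      by (rule index_shuffle_diag_block_unshuffle[OF p T x x'])
    also have "\<dots> = (\<Sum>b<n. T b $$ (x div n, x' div n) * (?w ^ ((x mod n)*b) * inverse ?w ^ ((x' mod n)*b)) / n)"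
      by (intro sum.cong refl) (simp only: times_divide_eq_right mult_ac)
    also have "\<dots> = (\<Sum>b<n. T b $$ (x div n, x' div n) * inverse ?w ^ (?c*b) / n)"
      using n by (simp only: root_unity_power_mult_inverse_power[OF cis_root_unity_power_eq_1[OF n]] mod_less_divisor)
    also have "\<dots> = circulant_blocks_mat p n (inverse_dft n T) $$ (x, x')"
      using x x' by (simp add: circulant_blocks_mat_def inverse_dft_def sum_divide_distrib)
    finally show "circulant_blocks_mat p n (inverse_dft n T) $$ (x, x') = (?P * ?D * ?Q) $$ (x, x')"
      by (rule sym)
  qed (simp_all add: circulant_blocks_mat_def shuffle_mat_def unshuffle_mat_def)
  moreover have "?D \<in> carrier_mat (p*n) (p*n)"
    using diag_block_mat_uniform[OF p T] by (simp add: mult.commute)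
  ultimately show ?thesis
    using PQ QP by (intro similar_matI[where n="p*n" and P="?P" and Q="?Q"]) (auto simp: circulant_blocks_mat_def shuffle_mat_def unshuffle_mat_def)
qed

lemma spec_mset_circulant_blocks_mat:
  assumes "p > 0" and "n > 0" and T: "\<And>b. b < n \<Longrightarrow> T b \<in> carrier_mat p p"
  shows "spec_mset (circulant_blocks_mat p n (inverse_dft n T)) = (\<Sum>b<n. spec_mset (T b))"
proof -
  have "spec_mset (circulant_blocks_mat p n (inverse_dft n T)) = spec_mset (diag_block_mat (map T [0..<n]))"
    unfolding spec_mset_def using char_poly_similar[OF circulant_blocks_mat_similar_diag_block_mat[OF assms]]
    by simp
  also have "\<dots> = (\<Sum>b<n. spec_mset (T b))"
    using T by (subst spec_mset_diag_block_mat) (auto simp: interv_sum_list_conv_sum_set_nat atLeast0LessThan)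
  finally show ?thesis .
qed

lemma g_circulant_shift:
  assumes "g_circulant p g A" and "i < p" and "j < p"
  shows "A $$ ((i+1) mod p, (j+g) mod p) = A $$ (i, j)"
proof -
  obtain a where a: "\<And>i j. i < p \<Longrightarrow> j < p \<Longrightarrow> A $$ (i, j) = a (nat ((int j - int i * int g) mod int p))"
    using assms(1) unfolding g_circulant_def by blast
  have "[int ((j+g) mod p) - int ((i+1) mod p) * int g = (int j + int g) - (int i + 1) * int g] (mod int p)"
    by (intro cong_diff cong_mult cong_refl) (simp_all add: cong_def of_nat_mod ac_simps)
  then have "(int ((j+g) mod p) - int ((i+1) mod p) * int g) mod int p = (int j - int i * int g) mod int p"
    by (simp add: cong_def algebra_simps)
  with assms(2,3) show ?thesis
    by (simp add: a)
qed

lemma g_circulant_blocks_circulant_blocks_mat: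
  assumes "\<And>c i j. i < p \<Longrightarrow> j < p \<Longrightarrow> L c ((i+1) mod p) ((j+g) mod p) = L c i j"
  shows "g_circulant_blocks p n g (circulant_blocks_mat p n L)"
  unfolding g_circulant_blocks_def
proof (intro conjI allI impI)
  show "circulant_blocks_mat p n L \<in> carrier_mat (p*n) (p*n)"
    by (simp add: circulant_blocks_mat_def)
  fix i j a b assume "i < p" "j < p" "a < n" "b < n"
  moreover have "(i+1) mod p < p" "(j+g) mod p < p"
    using \<open>i < p\<close> by simp_all
  ultimately show "circulant_blocks_mat p n L $$ (((i+1) mod p) * n + a, ((j+g) mod p) * n + b) =
    circulant_blocks_mat p n L $$ (i*n + a, j*n + b)"
    using assms by (simp add: circulant_blocks_mat_def mult_add_less_mult)
qed

lemma rspec_circulant_blocks_mat: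
  fixes S :: "nat \<Rightarrow> real mat"
  assumes p: "p > 0" and n: "n > 0" and S: "\<And>b. b < n \<Longrightarrow> S b \<in> carrier_mat p p"
    and real: "\<And>c i j. c < n \<Longrightarrow> i < p \<Longrightarrow> j < p \<Longrightarrow>
      Im (inverse_dft n (\<lambda>b. map_mat complex_of_real (S b)) c i j) = 0"
  shows "rspec (circulant_blocks_mat p n (\<lambda>c i j. Re (inverse_dft n (\<lambda>b. map_mat complex_of_real (S b)) c i j))) =
    (\<Sum>b<n. rspec (S b))"
proof -
  let ?T = "\<lambda>b. map_mat complex_of_real (S b)"
  have "map_mat complex_of_real (circulant_blocks_mat p n (\<lambda>c i j. Re (inverse_dft n ?T c i j))) =
    circulant_blocks_mat p n (inverse_dft n ?T)"
    using real n by (intro eq_matI) (simp_all add: circulant_blocks_mat_def less_mult_imp_div_less complex_eq_iff)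
  moreover have "spec_mset (circulant_blocks_mat p n (inverse_dft n ?T)) = (\<Sum>b<n. spec_mset (?T b))"
    using S by (intro spec_mset_circulant_blocks_mat[OF p n]) simp
  ultimately show ?thesis
    by (simp add: rspec_def)
qed

theorem mainTheorem11:
  fixes p g n :: nat and b1 b2 :: "nat \<Rightarrow> real" and S :: "nat \<Rightarrow> real mat"
  assumes "prime p"
    and "residue_primroot p g"
    and "n \<ge> 1"
    and "\<forall>k\<in>{1..n}. b2 k \<ge> 0"
    and "b1 1 \<ge> b2 1" and "b2 1 \<ge> 0"
    and "\<forall>k\<in>{1..n}. g_circulant p g (S k) \<and> rspec (S k) = Bk p (b1 k) (b2 k)"
    and "\<forall>k\<in>{2..n}. Bk p (b1 (n+2-k)) (b2 (n+2-k)) = image_mset cnj (Bk p (b1 k) (b2 k))"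
    and "\<forall>k\<in>{1..n}. \<forall>i<p. \<forall>j<p.
           (let Lkij = (1 / of_nat n) * (\<Sum>l=1..n. complex_of_real (S l $$ (i, j)) *
                         inverse (cis (2*pi / real n)) ^ ((k-1)*(l-1)))
            in Im Lkij = 0 \<and> Re Lkij \<ge> 0)"
  shows "\<exists>A :: real mat. g_circulant_blocks p n g A \<and>
           (\<forall>i<p*n. \<forall>j<p*n. A $$ (i, j) \<ge> 0) \<and>
           rspec A = (\<Sum>k\<in>{1..n}. Bk p (b1 k) (b2 k))"
(* Besides p > 0 and n >= 1, only the hypotheses on the S_k and on the L_k are used. *)
proof -
  have p: "p > 0"
    using assms(1) by (rule prime_gt_0_nat)
  have n: "n > 0"
    using assms(3) by simp
  have S: "S (Suc b) \<in> carrier_mat p p" "g_circulant p g (S (Suc b))"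
    "rspec (S (Suc b)) = Bk p (b1 (Suc b)) (b2 (Suc b))" if "b < n" for b
    using assms(7) that by (auto simp: g_circulant_def)
  then have S_dim: "dim_row (S (Suc b)) = p" "dim_col (S (Suc b)) = p" if "b < n" for b
    using that by auto
  define T where "T = (\<lambda>b. map_mat complex_of_real (S (Suc b)))"
  have L: "Im (inverse_dft n T c i j) = 0 \<and> Re (inverse_dft n T c i j) \<ge> 0" if "c < n" "i < p" "j < p" for c i j
  proof -
    have eq: "inverse_dft n T c i j = (1 / of_nat n) * (\<Sum>l=1..n. complex_of_real (S l $$ (i, j)) *
        inverse (cis (2*pi / real n)) ^ ((Suc c - 1)*(l-1)))"
      using that S_dim by (simp add: inverse_dft_def T_def sum.atLeast1_atMost_eq)
    have "Suc c \<in> {1..n}"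
      using that(1) by simp
    from assms(9)[rule_format, OF this that(2,3)] show ?thesis
      unfolding eq Let_def .
  qed
  define A where "A = circulant_blocks_mat p n (\<lambda>c i j. Re (inverse_dft n T c i j))"
  have "rspec A = (\<Sum>k\<in>{1..n}. Bk p (b1 k) (b2 k))"
    using rspec_circulant_blocks_mat[OF p n, of "\<lambda>b. S (Suc b)"] S(1,3) L
    by (simp add: A_def T_def sum.atLeast1_atMost_eq)
  moreover have "g_circulant_blocks p n g A"
    unfolding A_def using g_circulant_shift[OF S(2)] S_dim
    by (intro g_circulant_blocks_circulant_blocks_mat) (simp add: inverse_dft_def T_def)
  moreover have "\<forall>i<p*n. \<forall>j<p*n. A $$ (i, j) \<ge> 0"
    using L n by (simp add: A_def circulant_blocks_mat_def less_mult_imp_div_less)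
  ultimately show ?thesis
    by blast
qed

end
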